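(* Let $n\ge2$, let $P$ be a partial $n$-Metric on a set $X$, let $x_o\in X$, and let $f:X\to X$ be non-expansive, i.e. $P(\langle f(x)\rangle^{n-1},f(y))\le P(\langle x\rangle^{n-1},y)$ for all $x,y\in X$. If $a$ is a special limit of the orbit $\{f^i(x_o)\}_{i\in\mathbb{N}}$, then $$P(\langle a\rangle^{n-1},f(a))=P(\langle a\rangle^n)\quad\text{and}\quad P(\langle f(a)\rangle^{n-1},a)\le P(\langle a\rangle^n).$$
   Context: Notation: $\langle a\rangle^k$ denotes the $k$-tuple $(a,\dots,a)$ inserted into an argument list; $f^0(x_o)=x_o$, $f^{i+1}(x_o)=f(f^i(x_o))$. A partial $n$-Metric on $X$ is a function $P:X^n\to\mathbb{R}$ such that for all $x_1,\dots,x_n,a\in X$: (1) $P(\langle x_1\rangle^n)\le P(\langle x_1\rangle^{n-1},x_2)$; (2) $P$ is invariant under permutations of its arguments; (3) $P(\langle x_1\rangle^{n-1},x_2)=P(\langle x_1\rangle^n)$ and $P(\langle x_2\rangle^{n-1},x_1)=P(\langle x_2\rangle^n)$ iff $x_1=x_2$; (4) $P(x_1,\dots,x_n)\le P(x_1,\dots,x_{n-1},a)+P(\langle a\rangle^{n-1},x_n)-P(\langle a\rangle^n)$. A sequence $\{x_i\}$ is Cauchy with central distance $r$ if for every $\epsilon>0$ there is $N$ with $|P(x_{i_1},\dots,x_{i_n})-r|<\epsilon$ for all $i_1,\dots,i_n>N$. A point $a$ is a limit of $\{x_i\}$ iff for every $\epsilon>0$ there is $N$ with $P(\langle a\rangle^{n-1},x_i)-P(\langle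 a\rangle^n)<\epsilon$ for all $i>N$. A special limit of a Cauchy sequence with central distance $r$ is a limit $a$ with $P(\langle a\rangle^n)=r$. *)

theory Defs
  imports Main "HOL-Library.Multiset" Complex_Main
begin

text \<open>A partial n-Metric on X, with P applied to argument lists of length n.
  The k-tuple (a,...,a) is  replicate k a.\<close>

definition partial_nmetric :: "nat \<Rightarrow> 'a set \<Rightarrow> ('a list \<Rightarrow> real) \<Rightarrow> bool" where
  "partial_nmetric n X P \<longleftrightarrow>
     (\<forall>x1\<in>X. \<forall>x2\<in>X.
        P (replicate n x1) \<le> P (replicate (n-1) x1 @ [x2])) \<and>
     (\<forall>xs ys. set xs \<subseteq> X \<longrightarrow> length xs = n \<longrightarrow> mset ys = mset xs \<longrightarrow> P xs = P ys) \<and>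
     (\<forall>x1\<in>X. \<forall>x2\<in>X.
        (P (replicate (n-1) x1 @ [x2]) = P (replicate n x1) \<and>
         P (replicate (n-1) x2 @ [x1]) = P (replicate n x2)) \<longleftrightarrow> x1 = x2) \<and>
     (\<forall>xs a xn. set xs \<subseteq> X \<longrightarrow> length xs = n - 1 \<longrightarrow> a \<in> X \<longrightarrow> xn \<in> X \<longrightarrow>
        P (xs @ [xn]) \<le> P (xs @ [a]) + P (replicate (n-1) a @ [xn]) - P (replicate n a))"

definition nmetric_limit :: "nat \<Rightarrow> ('a list \<Rightarrow> real) \<Rightarrow> (nat \<Rightarrow> 'a) \<Rightarrow> 'a \<Rightarrow> bool" where
  "nmetric_limit n P x a \<longleftrightarrow>
     (\<forall>\<epsilon>>0. \<exists>N. \<forall>i>N. P (replicate (n-1) a @ [x i]) - P (replicate n a) < \<epsilon>)"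

definition nmetric_cauchy :: "nat \<Rightarrow> ('a list \<Rightarrow> real) \<Rightarrow> (nat \<Rightarrow> 'a) \<Rightarrow> real \<Rightarrow> bool" where
  "nmetric_cauchy n P x r \<longleftrightarrow>
     (\<forall>\<epsilon>>0. \<exists>N. \<forall>is. length is = n \<longrightarrow> (\<forall>i\<in>set is. i > N) \<longrightarrow>
        \<bar>P (map x is) - r\<bar> < \<epsilon>)"

definition nmetric_special_limit :: "nat \<Rightarrow> ('a list \<Rightarrow> real) \<Rightarrow> (nat \<Rightarrow> 'a) \<Rightarrow> 'a \<Rightarrow> bool" where
  "nmetric_special_limit n P x a \<longleftrightarrow>
     (\<exists>r. nmetric_cauchy n P x r \<and> nmetric_limit n P x a \<and> P (replicate n a) = r)"

end

theory Submission
  imports Defs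
begin

text \<open>Permuting arguments and applying the triangle inequality \<open>n - 1\<close> times gives the swap
  bound \<open>P(\<langle>y\<rangle>\<^sup>n\<^sup>-\<^sup>1, a) \<le> P(\<langle>a\<rangle>\<^sup>n) + (n - 1) (P(\<langle>a\<rangle>\<^sup>n\<^sup>-\<^sup>1, y) - P(\<langle>a\<rangle>\<^sup>n))\<close>. Along the orbit
  \<open>x\<^sub>i = f\<^sup>i(x\<^sub>o)\<close> both \<open>P(\<langle>a\<rangle>\<^sup>n\<^sup>-\<^sup>1, x\<^sub>i)\<close> and \<open>P(\<langle>x\<^sub>i\<rangle>\<^sup>n)\<close> tend to \<open>P(\<langle>a\<rangle>\<^sup>n)\<close>, because \<open>a\<close> is a
  special limit. The triangle inequality through \<open>x\<^sub>i\<^sub>+\<^sub>1 = f x\<^sub>i\<close>, non-expansiveness of \<open>f\<close> and the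
  swap bound then dominate \<open>P(\<langle>a\<rangle>\<^sup>n\<^sup>-\<^sup>1, f a)\<close> and \<open>P(\<langle>f a\<rangle>\<^sup>n\<^sup>-\<^sup>1, a)\<close> by sequences converging to
  \<open>P(\<langle>a\<rangle>\<^sup>n)\<close>; the reverse inequality for the first is the axiom \<open>P(\<langle>a\<rangle>\<^sup>n) \<le> P(\<langle>a\<rangle>\<^sup>n\<^sup>-\<^sup>1, y)\<close>.\<close>

lemma partial_nmetric_replicate_le:
  assumes "partial_nmetric n X P" "x \<in> X" "y \<in> X"
  shows "P (replicate n x) \<le> P (replicate (n-1) x @ [y])"
  using assms unfolding partial_nmetric_def by blast

lemma partial_nmetric_perm:
  assumes "partial_nmetric n X P" "set xs \<subseteq> X" "length xs = n" "mset ys = mset xs"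
  shows "P xs = P ys"
  using assms unfolding partial_nmetric_def by blast

lemma partial_nmetric_triangle:
  assumes "partial_nmetric n X P" "set xs \<subseteq> X" "length xs = n - 1" "b \<in> X" "y \<in> X"
  shows "P (xs @ [y]) \<le> P (xs @ [b]) + P (replicate (n-1) b @ [y]) - P (replicate n b)"
  using assms unfolding partial_nmetric_def by blast

lemma partial_nmetric_replicate_append_le:
  assumes pm: "partial_nmetric n X P" and a: "a \<in> X" and y: "y \<in> X" and "k \<le> n"
  shows "P (replicate (n-k) a @ replicate k y)
           \<le> P (replicate n a) + real k * (P (replicate (n-1) a @ [y]) - P (replicate n a))"
  using \<open>k \<le> n\<close>
proof (induction k)
  case 0
  then show ?case by simp
next
  case (Suc k)
  define xs where "xs = replicate (n - Suc k) a @ replicate k y"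
  have xs: "set xs \<subseteq> X" "length xs = n - 1"
    using a y Suc.prems by (auto simp: xs_def)
  have "P (replicate (n - Suc k) a @ replicate (Suc k) y) = P (xs @ [y])"
    by (simp add: xs_def replicate_append_same[symmetric])
  also have "\<dots> \<le> P (xs @ [a]) + P (replicate (n-1) a @ [y]) - P (replicate n a)"
    using partial_nmetric_triangle[OF pm xs a y] .
  also have "P (xs @ [a]) = P (replicate (n - k) a @ replicate k y)"
  proof (rule partial_nmetric_perm[OF pm])
    have "n - k = Suc (n - Suc k)" using Suc.prems by simp
    then show "mset (replicate (n - k) a @ replicate k y) = mset (xs @ [a])"
      by (simp add: xs_def)
  qed (use xs a Suc.prems in auto)
  finally show ?case
    using Suc by (simp add: algebra_simps)
qed

lemma partial_nmetric_swap_le: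
  assumes pm: "partial_nmetric n X P" and "n \<ge> 1" and a: "a \<in> X" and y: "y \<in> X"
  shows "P (replicate (n-1) y @ [a])
           \<le> P (replicate n a) + real (n-1) * (P (replicate (n-1) a @ [y]) - P (replicate n a))"
proof -
  have "n - (n-1) = 1" using \<open>n \<ge> 1\<close> by simp
  then have "P (replicate (n-1) y @ [a]) = P (replicate (n-(n-1)) a @ replicate (n-1) y)"
    by (intro partial_nmetric_perm[OF pm]) (use a y \<open>n \<ge> 1\<close> in auto)
  also have "\<dots> \<le> P (replicate n a) + real (n-1) * (P (replicate (n-1) a @ [y]) - P (replicate n a))"
    using partial_nmetric_replicate_append_le[OF pm a y] by simp
  finally show ?thesis .
qed

lemma nmetric_limit_LIMSEQ:
  assumes pm: "partial_nmetric n X P" and "a \<in> X" and "\<And>i. x i \<in> X"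
    and "nmetric_limit n P x a"
  shows "(\<lambda>i. P (replicate (n-1) a @ [x i])) \<longlonglongrightarrow> P (replicate n a)"
proof (rule LIMSEQ_I)
  fix e :: real assume "e > 0"
  then obtain N where "\<And>i. i > N \<Longrightarrow> P (replicate (n-1) a @ [x i]) - P (replicate n a) < e"
    using assms(4) unfolding nmetric_limit_def by blast
  moreover have "P (replicate n a) \<le> P (replicate (n-1) a @ [x i])" for i
    using partial_nmetric_replicate_le[OF pm] assms(2,3) by blast
  ultimately have "\<forall>i\<ge>Suc N. norm (P (replicate (n-1) a @ [x i]) - P (replicate n a)) < e"
    by fastforce
  then show "\<exists>N. \<forall>i\<ge>N. norm (P (replicate (n-1) a @ [x i]) - P (replicate n a)) < e" ..
qed

lemma nmetric_cauchy_replicate_LIMSEQ: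
  assumes "nmetric_cauchy n P x r"
  shows "(\<lambda>i. P (replicate n (x i))) \<longlonglongrightarrow> r"
proof (rule LIMSEQ_I)
  fix e :: real assume "e > 0"
  then obtain N where N: "\<And>is. length is = n \<Longrightarrow> \<forall>i\<in>set is. i > N \<Longrightarrow> \<bar>P (map x is) - r\<bar> < e"
    using assms unfolding nmetric_cauchy_def by blast
  have "\<forall>i\<ge>Suc N. norm (P (replicate n (x i)) - r) < e"
    using N[of "replicate n _"] by (simp add: map_replicate)
  then show "\<exists>N. \<forall>i\<ge>N. norm (P (replicate n (x i)) - r) < e" ..
qed

lemma nonexpansive_bound_towards_image:
  assumes pm: "partial_nmetric n X P" and "n \<ge> 1" and a: "a \<in> X" and u: "u \<in> X"
    and fX: "\<forall>x\<in>X. f x \<in> X"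
    and ne: "\<forall>x\<in>X. \<forall>y\<in>X. P (replicate (n-1) (f x) @ [f y]) \<le> P (replicate (n-1) x @ [y])"
  shows "P (replicate (n-1) a @ [f a])
           \<le> P (replicate (n-1) a @ [f u]) - P (replicate n (f u)) + P (replicate n a)
             + real (n-1) * (P (replicate (n-1) a @ [u]) - P (replicate n a))"
proof -
  have "P (replicate (n-1) a @ [f a])
          \<le> P (replicate (n-1) a @ [f u]) + P (replicate (n-1) (f u) @ [f a]) - P (replicate n (f u))"
    using partial_nmetric_triangle[OF pm, of "replicate (n-1) a" "f u" "f a"] a u fX
    by (simp add: set_replicate_conv_if)
  moreover have "P (replicate (n-1) (f u) @ [f a]) \<le> P (replicate (n-1) u @ [a])"
    using ne a u by blast
  ultimately show ?thesis
    using partial_nmetric_swap_le[OF pm \<open>n \<ge> 1\<close> a u] by linarith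
qed

lemma nonexpansive_bound_from_image:
  assumes pm: "partial_nmetric n X P" and "n \<ge> 1" and a: "a \<in> X" and u: "u \<in> X"
    and fX: "\<forall>x\<in>X. f x \<in> X"
    and ne: "\<forall>x\<in>X. \<forall>y\<in>X. P (replicate (n-1) (f x) @ [f y]) \<le> P (replicate (n-1) x @ [y])"
  shows "P (replicate (n-1) (f a) @ [a])
           \<le> P (replicate (n-1) a @ [u]) - P (replicate n (f u)) + P (replicate n a)
             + real (n-1) * (P (replicate (n-1) a @ [f u]) - P (replicate n a))"
proof -
  have "P (replicate (n-1) (f a) @ [a])
          \<le> P (replicate (n-1) (f a) @ [f u]) + P (replicate (n-1) (f u) @ [a]) - P (replicate n (f u))"
    using partial_nmetric_triangle[OF pm, of "replicate (n-1) (f a)" "f u" a] a u fX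
    by (simp add: set_replicate_conv_if)
  moreover have "P (replicate (n-1) (f a) @ [f u]) \<le> P (replicate (n-1) a @ [u])"
    using ne a u by blast
  ultimately show ?thesis
    using partial_nmetric_swap_le[OF pm \<open>n \<ge> 1\<close> a] u fX by fastforce
qed

lemma nonexpansive_orbit_limit_le:
  assumes pm: "partial_nmetric n X P" and n: "n \<ge> 1" and a: "a \<in> X"
    and fX: "\<forall>x\<in>X. f x \<in> X"
    and ne: "\<forall>x\<in>X. \<forall>y\<in>X. P (replicate (n-1) (f x) @ [f y]) \<le> P (replicate (n-1) x @ [y])"
    and xX: "\<And>i. x i \<in> X" and xS: "\<And>i. x (Suc i) = f (x i)"
    and lim: "(\<lambda>i. P (replicate (n-1) a @ [x i])) \<longlonglongrightarrow> P (replicate n a)"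
    and diag: "(\<lambda>i. P (replicate n (x i))) \<longlonglongrightarrow> P (replicate n a)"
  shows "P (replicate (n-1) a @ [f a]) \<le> P (replicate n a)"
    and "P (replicate (n-1) (f a) @ [a]) \<le> P (replicate n a)"
proof -
  define r where "r = P (replicate n a)"
  define S where "S = (\<lambda>i. P (replicate (n-1) a @ [x i]))"
  define Q where "Q = (\<lambda>i. P (replicate n (x i)))"
  have S: "S \<longlonglongrightarrow> r" and Q: "Q \<longlonglongrightarrow> r"
    using lim diag by (simp_all add: S_def Q_def r_def)
  have "(\<lambda>i. S (Suc i) - Q (Suc i) + r + real (n-1) * (S i - r)) \<longlonglongrightarrow> r - r + r + real (n-1) * (r - r)"
    and "(\<lambda>i. S i - Q (Suc i) + r + real (n-1) * (S (Suc i) - r)) \<longlonglongrightarrow> r - r + r + real (n-1) * (r - r)"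
    by (intro tendsto_intros S Q LIMSEQ_Suc[OF S] LIMSEQ_Suc[OF Q])+
  then have lim_towards: "(\<lambda>i. S (Suc i) - Q (Suc i) + r + real (n-1) * (S i - r)) \<longlonglongrightarrow> r"
    and lim_from: "(\<lambda>i. S i - Q (Suc i) + r + real (n-1) * (S (Suc i) - r)) \<longlonglongrightarrow> r"
    by simp_all
  have "P (replicate (n-1) a @ [f a]) \<le> S (Suc i) - Q (Suc i) + r + real (n-1) * (S i - r)"
    and "P (replicate (n-1) (f a) @ [a]) \<le> S i - Q (Suc i) + r + real (n-1) * (S (Suc i) - r)" for i
    using nonexpansive_bound_towards_image[OF pm n a xX fX ne, of i]
      nonexpansive_bound_from_image[OF pm n a xX fX ne, of i]
    by (simp_all add: S_def Q_def r_def xS)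
  then show "P (replicate (n-1) a @ [f a]) \<le> r" "P (replicate (n-1) (f a) @ [a]) \<le> r"
    using LIMSEQ_le_const[OF lim_towards] LIMSEQ_le_const[OF lim_from] by blast+
qed

theorem lemma6p7:
  fixes n :: nat and X :: "'a set" and P :: "'a list \<Rightarrow> real"
    and f :: "'a \<Rightarrow> 'a" and xo a :: 'a
  assumes "n \<ge> 2"
    and "partial_nmetric n X P"
    and "xo \<in> X" and "a \<in> X"
    and "\<forall>x\<in>X. f x \<in> X"
    and "\<forall>x\<in>X. \<forall>y\<in>X. P (replicate (n-1) (f x) @ [f y]) \<le> P (replicate (n-1) x @ [y])"
    and "nmetric_special_limit n P (\<lambda>i. (f ^^ i) xo) a"
  shows "P (replicate (n-1) a @ [f a]) = P (replicate n a)
       \<and> P (replicate (n-1) (f a) @ [a]) \<le> P (replicate n a)"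
proof -
  define x where "x i = (f ^^ i) xo" for i
  have xX: "x i \<in> X" for i
    by (induction i) (use assms(3,5) in \<open>auto simp: x_def\<close>)
  have xS: "x (Suc i) = f (x i)" for i
    by (simp add: x_def)
  obtain cauchy: "nmetric_cauchy n P x (P (replicate n a))" and lim: "nmetric_limit n P x a"
    using assms(7) unfolding nmetric_special_limit_def x_def by blast
  have "P (replicate (n-1) a @ [f a]) \<le> P (replicate n a)"
    and "P (replicate (n-1) (f a) @ [a]) \<le> P (replicate n a)"
    using nonexpansive_orbit_limit_le[OF assms(2) _ assms(4,5,6) xX xS
        nmetric_limit_LIMSEQ[OF assms(2,4) xX lim] nmetric_cauchy_replicate_LIMSEQ[OF cauchy]]
      assms(1) by simp_all
  moreover have "P (replicate n a) \<le> P (replicate (n-1) a @ [f a])"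
    using partial_nmetric_replicate_le[OF assms(2,4)] assms(4,5) by blast
  ultimately show ?thesis
    by simp
qed

end
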